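(* Let $X$ be a nonempty compact subset of $\mathbb{R}^n$, $\varphi:X\to\mathbb{R}$ upper semicontinuous, and $\psi:X\to\mathbb{R}$ Lipschitz continuous with constant $L_\psi$ with respect to a norm $\|\cdot\|$. For $\varepsilon\geq0$ let $F_\varepsilon=\{x\in X:\varphi(x)\geq\sup_{x'\in X}\varphi(x')-\varepsilon\}$ and $g(\varepsilon)=\sup_{x\in F_\varepsilon}d(x,F_0)$, where $d(x,F_0)=\inf_{y\in F_0}\|y-x\|$. Let $M=\sup_X\psi-\inf_X\psi$. Then for every $\delta\geq0$, \[ \Big|\sup_{x\in X}\big(\varphi(x)+\delta\psi(x)\big)-\Big[\sup_{x\in X}\varphi(x)+\delta\sup_{x\in\operatorname{arg\,max}\varphi}\psi(x)\Big]\Big|\leq L_\psi\,\delta\, g(\delta M). \]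
   Context: $\operatorname{arg\,max}\varphi=\{x\in X:\varphi(x)=\sup_X\varphi\}$. *)

theory Defs
  imports "HOL-Analysis.Analysis"
begin

definition is_norm :: "('a::real_vector \<Rightarrow> real) \<Rightarrow> bool" where
  "is_norm N \<longleftrightarrow> (\<forall>x. 0 \<le> N x) \<and> (\<forall>x. N x = 0 \<longleftrightarrow> x = 0)
     \<and> (\<forall>c x. N (c *\<^sub>R x) = \<bar>c\<bar> * N x) \<and> (\<forall>x y. N (x + y) \<le> N x + N y)"

definition upper_semicontinuous_on :: "'a::topological_space set \<Rightarrow> ('a \<Rightarrow> real) \<Rightarrow> bool" where
  "upper_semicontinuous_on X f \<longleftrightarrow> (\<forall>a. openin (top_of_set X) {x \<in> X. f x < a})"

definition lipschitz_wrt :: "('a::real_vector \<Rightarrow> real) \<Rightarrow> real \<Rightarrow> 'a set \<Rightarrow> ('a \<Rightarrow> real) \<Rightarrow> bool" where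
  "lipschitz_wrt N L X f \<longleftrightarrow> 0 \<le> L \<and> (\<forall>x\<in>X. \<forall>y\<in>X. \<bar>f x - f y\<bar> \<le> L * N (x - y))"

definition argmax_set :: "'a set \<Rightarrow> ('a \<Rightarrow> real) \<Rightarrow> 'a set" where
  "argmax_set X \<phi> = {x \<in> X. \<phi> x = Sup (\<phi> ` X)}"

definition near_opt :: "'a set \<Rightarrow> ('a \<Rightarrow> real) \<Rightarrow> real \<Rightarrow> 'a set" where
  "near_opt X \<phi> \<epsilon> = {x \<in> X. \<phi> x \<ge> Sup (\<phi> ` X) - \<epsilon>}"

definition normdist :: "('a::real_vector \<Rightarrow> real) \<Rightarrow> 'a \<Rightarrow> 'a set \<Rightarrow> real" where
  "normdist N x F = Inf ((\<lambda>y. N (y - x)) ` F)"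

definition gfun :: "('a::real_vector \<Rightarrow> real) \<Rightarrow> 'a set \<Rightarrow> ('a \<Rightarrow> real) \<Rightarrow> real \<Rightarrow> real" where
  "gfun N X \<phi> \<epsilon> = Sup ((\<lambda>x. normdist N x (near_opt X \<phi> 0)) ` near_opt X \<phi> \<epsilon>)"

end

theory Submission imports Defs begin

text \<open>Let \<open>m = max \<phi>\<close>, \<open>F\<^sub>0 = arg max \<phi>\<close> and \<open>A = sup\<^sub>F\<^sub>0 \<psi>\<close>. Evaluating
  \<open>\<phi> + \<delta>\<psi>\<close> on \<open>F\<^sub>0\<close> gives the lower bound \<open>m + \<delta>A\<close>. For the upper bound, a point of
  \<open>F\<^sub>\<delta>\<^sub>M\<close> has \<open>\<phi> \<le> m\<close> and, by the Lipschitz property, \<open>\<psi> \<le> A + L d(x,F\<^sub>0) \<le> A + L g(\<delta>M)\<close>;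
  a point outside \<open>F\<^sub>\<delta>\<^sub>M\<close> loses more than \<open>\<delta>M\<close> in \<open>\<phi>\<close>, which the gain \<open>\<delta>(\<psi> - A) \<le> \<delta>M\<close>
  cannot compensate. Compactness and upper semicontinuity provide the maximiser of \<open>\<phi>\<close>;
  since every norm on a finite-dimensional space is dominated by the Euclidean one, \<open>\<psi>\<close>
  is continuous and all suprema involved are finite.\<close>

lemma is_norm_nonneg: "is_norm N \<Longrightarrow> 0 \<le> N x"
  unfolding is_norm_def by blast

lemma is_norm_zero: "is_norm N \<Longrightarrow> N 0 = 0"
  unfolding is_norm_def by blast

lemma is_norm_scaleR: "is_norm N \<Longrightarrow> N (c *\<^sub>R x) = \<bar>c\<bar> * N x"
  unfolding is_norm_def by blast

lemma is_norm_triangle: "is_norm N \<Longrightarrow> N (x + y) \<le> N x + N y"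
  unfolding is_norm_def by blast

lemma is_norm_minus_commute:
  assumes "is_norm N"
  shows "N (y - x) = N (x - y)"
  using is_norm_scaleR[OF assms, of "-1" "x - y"] by simp

lemma is_norm_sum_le:
  assumes "is_norm N"
  shows "N (sum f S) \<le> (\<Sum>i\<in>S. N (f i))"
proof (induction S rule: infinite_finite_induct)
  case (insert a S)
  then show ?case
    using is_norm_triangle[OF assms, of "f a" "sum f S"] by simp
qed (simp_all add: is_norm_zero[OF assms])

lemma is_norm_le_norm_Basis_sum:
  fixes x :: "'a::euclidean_space"
  assumes "is_norm N"
  shows "N x \<le> norm x * (\<Sum>b\<in>Basis. N b)"
proof -
  have "N x = N (\<Sum>b\<in>Basis. inner x b *\<^sub>R b)"
    by (simp add: euclidean_representation)
  also have "\<dots> \<le> (\<Sum>b\<in>Basis. N (inner x b *\<^sub>R b))"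
    by (rule is_norm_sum_le[OF assms])
  also have "\<dots> = (\<Sum>b\<in>Basis. \<bar>inner x b\<bar> * N b)"
    by (simp add: is_norm_scaleR[OF assms])
  also have "\<dots> \<le> (\<Sum>b\<in>Basis. norm x * N b)"
    by (intro sum_mono mult_right_mono Basis_le_norm is_norm_nonneg[OF assms])
  finally show ?thesis
    by (simp add: sum_distrib_left)
qed

lemma lipschitz_wrt_nonneg: "lipschitz_wrt N L X f \<Longrightarrow> 0 \<le> L"
  unfolding lipschitz_wrt_def by blast

lemma lipschitz_wrt_imp_lipschitz_on:
  fixes X :: "'a::euclidean_space set"
  assumes "is_norm N" and "lipschitz_wrt N L X f"
  shows "(L * (\<Sum>b\<in>Basis. N b))-lipschitz_on X f"
proof (rule lipschitz_onI)
  fix x y assume "x \<in> X" "y \<in> X"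
  then have "dist (f x) (f y) \<le> L * N (x - y)"
    using assms(2) unfolding lipschitz_wrt_def dist_real_def by blast
  also have "\<dots> \<le> L * (dist x y * (\<Sum>b\<in>Basis. N b))"
    using is_norm_le_norm_Basis_sum[OF assms(1)] lipschitz_wrt_nonneg[OF assms(2)]
    by (simp add: dist_norm mult_left_mono)
  finally show "dist (f x) (f y) \<le> L * (\<Sum>b\<in>Basis. N b) * dist x y"
    by (simp add: algebra_simps)
next
  show "0 \<le> L * (\<Sum>b\<in>Basis. N b)"
    using lipschitz_wrt_nonneg[OF assms(2)] by (simp add: sum_nonneg is_norm_nonneg[OF assms(1)])
qed

lemma lipschitz_wrt_bounded_image:
  fixes X :: "'a::euclidean_space set"
  assumes "is_norm N" and "lipschitz_wrt N L X f" and "compact X"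
  shows "bounded (f ` X)"
  using lipschitz_on_continuous_on[OF lipschitz_wrt_imp_lipschitz_on[OF assms(1,2)]]
  by (intro compact_imp_bounded compact_continuous_image assms(3))

lemma compact_attains_sup_upper_semicontinuous:
  fixes X :: "'a::t2_space set"
  assumes "compact X" and "X \<noteq> {}" and "upper_semicontinuous_on X f"
  obtains x where "x \<in> X" and "\<And>y. y \<in> X \<Longrightarrow> f y \<le> f x"
proof -
  have "X \<inter> (\<Inter>a\<in>f ` X. {x\<in>X. a \<le> f x}) \<noteq> {}"
  proof (rule compact_imp_fip_image[OF assms(1)])
    fix a
    have "closedin (top_of_set X) (X - {x\<in>X. f x < a})"
      using assms(3) unfolding upper_semicontinuous_on_def
      by (metis closedin_diff closedin_topspace topspace_euclidean_subtopology)
    moreover have "X - {x\<in>X. f x < a} = {x\<in>X. a \<le> f x}"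
      by auto
    ultimately show "closed {x\<in>X. a \<le> f x}"
      using closedin_closed_trans compact_imp_closed[OF assms(1)] by metis
  next
    fix I assume I: "finite I" "I \<subseteq> f ` X"
    show "X \<inter> (\<Inter>a\<in>I. {x\<in>X. a \<le> f x}) \<noteq> {}"
    proof (cases "I = {}")
      case False
      then obtain x where "x \<in> X" "f x = Max I"
        using Max_in[OF I(1)] I(2) by (metis imageE subsetD)
      then show ?thesis
        using I(1) by auto
    qed (use assms(2) in auto)
  qed
  then show ?thesis
    using that by blast
qed

lemma near_opt_0_eq_argmax_set:
  "bdd_above (\<phi> ` X) \<Longrightarrow> near_opt X \<phi> 0 = argmax_set X \<phi>"
  unfolding near_opt_def argmax_set_def by (auto intro: antisym cSup_upper)

lemma argmax_set_subset_near_opt: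
  "0 \<le> \<epsilon> \<Longrightarrow> argmax_set X \<phi> \<subseteq> near_opt X \<phi> \<epsilon>"
  unfolding near_opt_def argmax_set_def by auto

lemma normdist_nonneg:
  assumes "is_norm N" and "F \<noteq> {}"
  shows "0 \<le> normdist N x F"
  unfolding normdist_def using assms(2) by (auto intro: cInf_greatest is_norm_nonneg[OF assms(1)])

lemma normdist_le:
  assumes "is_norm N" and "y \<in> F"
  shows "normdist N x F \<le> N (y - x)"
  unfolding normdist_def using assms(2)
  by (auto intro!: cInf_lower bdd_belowI[of _ 0] is_norm_nonneg[OF assms(1)])

lemma bdd_above_normdist:
  fixes X :: "'a::euclidean_space set"
  assumes "is_norm N" and "bounded X" and "y \<in> F"
  shows "bdd_above ((\<lambda>x. normdist N x F) ` X)"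
proof -
  obtain B where B: "\<And>x. x \<in> X \<Longrightarrow> norm x \<le> B"
    using assms(2) unfolding bounded_iff by blast
  have "normdist N x F \<le> (norm y + B) * (\<Sum>b\<in>Basis. N b)" if "x \<in> X" for x
  proof -
    have "normdist N x F \<le> N (y - x)"
      by (rule normdist_le[OF assms(1,3)])
    also have "\<dots> \<le> norm (y - x) * (\<Sum>b\<in>Basis. N b)"
      by (rule is_norm_le_norm_Basis_sum[OF assms(1)])
    also have "\<dots> \<le> (norm y + B) * (\<Sum>b\<in>Basis. N b)"
      using norm_triangle_ineq4[of y x] B[OF that]
      by (intro mult_right_mono sum_nonneg is_norm_nonneg[OF assms(1)]) auto
    finally show ?thesis .
  qed
  then show ?thesis
    by (rule bdd_aboveI2)
qed

lemma normdist_le_gfun: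
  assumes "bdd_above (\<phi> ` X)"
    and "bdd_above ((\<lambda>x. normdist N x (argmax_set X \<phi>)) ` X)"
    and "x \<in> near_opt X \<phi> \<epsilon>"
  shows "normdist N x (argmax_set X \<phi>) \<le> gfun N X \<phi> \<epsilon>"
proof -
  have "bdd_above ((\<lambda>x. normdist N x (argmax_set X \<phi>)) ` near_opt X \<phi> \<epsilon>)"
    using assms(2) unfolding near_opt_def by (rule bdd_above_mono) auto
  then show ?thesis
    unfolding gfun_def near_opt_0_eq_argmax_set[OF assms(1)] using assms(3) by (simp add: cSup_upper)
qed

lemma gfun_nonneg:
  assumes "is_norm N" and "bdd_above (\<phi> ` X)" and "argmax_set X \<phi> \<noteq> {}"
    and "bdd_above ((\<lambda>x. normdist N x (argmax_set X \<phi>)) ` X)" and "0 \<le> \<epsilon>"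
  shows "0 \<le> gfun N X \<phi> \<epsilon>"
proof -
  obtain y where y: "y \<in> argmax_set X \<phi>"
    using assms(3) by blast
  have "0 \<le> normdist N y (argmax_set X \<phi>)"
    using normdist_nonneg[OF assms(1,3)] .
  also have "\<dots> \<le> gfun N X \<phi> \<epsilon>"
    using subsetD[OF argmax_set_subset_near_opt[OF assms(5)] y] by (rule normdist_le_gfun[OF assms(2,4)])
  finally show ?thesis .
qed

lemma lipschitz_wrt_le_Sup_plus_normdist:
  assumes "is_norm N" and "lipschitz_wrt N L X f"
    and "F \<subseteq> X" and "F \<noteq> {}" and "bdd_above (f ` F)" and "x \<in> X"
  shows "f x \<le> Sup (f ` F) + L * normdist N x F"
proof -
  have L: "0 \<le> L"
    using lipschitz_wrt_nonneg[OF assms(2)] .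
  have le: "f x - Sup (f ` F) \<le> L * N (y - x)" if "y \<in> F" for y
  proof -
    have "f x - f y \<le> L * N (x - y)"
      using assms(2,3,6) that unfolding lipschitz_wrt_def by fastforce
    moreover have "f y \<le> Sup (f ` F)"
      using assms(5) that by (simp add: cSup_upper)
    ultimately show ?thesis
      by (simp add: is_norm_minus_commute[OF assms(1)])
  qed
  show ?thesis
  proof (cases "L = 0")
    case True
    obtain y where "y \<in> F"
      using assms(4) by blast
    then show ?thesis
      using le True by fastforce
  next
    case False
    then have "(f x - Sup (f ` F)) / L \<le> normdist N x F"
      unfolding normdist_def using assms(4) le L
      by (intro cInf_greatest) (auto simp: divide_le_eq mult.commute)
    then show ?thesis
      using False L by (simp add: divide_le_eq mult.commute)
  qed
qed

lemma Sup_perturbed_ge: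
  assumes "0 \<le> \<delta>" and "argmax_set X \<phi> \<noteq> {}"
    and "bdd_above (\<phi> ` X)" and "bdd_above (\<psi> ` X)"
  shows "Sup (\<phi> ` X) + \<delta> * Sup (\<psi> ` argmax_set X \<phi>)
           \<le> Sup ((\<lambda>x. \<phi> x + \<delta> * \<psi> x) ` X)"
    (is "?m + \<delta> * ?A \<le> ?S")
proof -
  have "bdd_above ((\<lambda>x. \<phi> x + \<delta> * \<psi> x) ` X)"
  proof -
    obtain a b where "\<And>x. x \<in> X \<Longrightarrow> \<phi> x \<le> a" "\<And>x. x \<in> X \<Longrightarrow> \<psi> x \<le> b"
      using assms(3,4) unfolding bdd_above_def by blast
    then have "\<phi> x + \<delta> * \<psi> x \<le> a + \<delta> * b" if "x \<in> X" for x
      using that assms(1) by (meson add_mono mult_left_mono)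
    then show ?thesis
      by (rule bdd_aboveI2)
  qed
  then have on_argmax: "?m + \<delta> * \<psi> y \<le> ?S" if "y \<in> argmax_set X \<phi>" for y
    using that unfolding argmax_set_def by (metis (mono_tags, lifting) cSup_upper image_eqI mem_Collect_eq)
  show ?thesis
  proof (cases "\<delta> = 0")
    case True
    then show ?thesis
      using on_argmax assms(2) by fastforce
  next
    case False
    then have "?A \<le> (?S - ?m) / \<delta>"
      using on_argmax assms(1,2)
      by (intro cSup_least) (fastforce simp: le_divide_eq mult.commute)+
    then show ?thesis
      using False assms(1) by (simp add: le_divide_eq mult.commute)
  qed
qed

lemma Sup_perturbed_le:
  fixes X :: "'a::real_vector set"
  assumes "is_norm N" and "lipschitz_wrt N L X \<psi>" and "0 \<le> \<delta>" and "X \<noteq> {}"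
    and "bdd_above (\<phi> ` X)" and "argmax_set X \<phi> \<noteq> {}"
    and "bdd_above (\<psi> ` X)" and "bdd_below (\<psi> ` X)"
    and "bdd_above ((\<lambda>x. normdist N x (argmax_set X \<phi>)) ` X)"
  shows "Sup ((\<lambda>x. \<phi> x + \<delta> * \<psi> x) ` X)
           \<le> Sup (\<phi> ` X) + \<delta> * Sup (\<psi> ` argmax_set X \<phi>)
             + L * \<delta> * gfun N X \<phi> (\<delta> * (Sup (\<psi> ` X) - Inf (\<psi> ` X)))"
proof -
  define m F0 A M g where "m = Sup (\<phi> ` X)" and "F0 = argmax_set X \<phi>"
    and "A = Sup (\<psi> ` F0)" and "M = Sup (\<psi> ` X) - Inf (\<psi> ` X)"
    and "g = gfun N X \<phi> (\<delta> * M)"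
  obtain y0 where y0: "y0 \<in> F0"
    using assms(6) F0_def by blast
  have F0X: "F0 \<subseteq> X"
    unfolding F0_def argmax_set_def by blast
  with y0 have y0X: "y0 \<in> X"
    by blast
  have L: "0 \<le> L"
    using lipschitz_wrt_nonneg[OF assms(2)] .
  have \<psi>_le_Sup: "\<psi> x \<le> Sup (\<psi> ` X)" and Inf_le_\<psi>: "Inf (\<psi> ` X) \<le> \<psi> x" if "x \<in> X" for x
    using that assms(7,8) by (simp_all add: cSup_upper cInf_lower)
  have bdd_F0: "bdd_above (\<psi> ` F0)"
    using F0X assms(7) by (meson bdd_above_mono image_mono)
  have \<psi>_y0: "\<psi> y0 \<le> A"
    unfolding A_def using y0 bdd_F0 by (simp add: cSup_upper)
  have "0 \<le> M"
    unfolding M_def using \<psi>_le_Sup[OF y0X] Inf_le_\<psi>[OF y0X] by linarith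
  have dist_le_g: "normdist N x F0 \<le> g" if "x \<in> near_opt X \<phi> (\<delta> * M)" for x
    unfolding F0_def g_def using normdist_le_gfun[OF assms(5,9) that] .
  have "0 \<le> g"
    unfolding g_def using gfun_nonneg[OF assms(1,5,6,9)] assms(3) \<open>0 \<le> M\<close> by simp
  have "\<phi> x + \<delta> * \<psi> x \<le> m + \<delta> * A + L * \<delta> * g" if "x \<in> X" for x
  proof (cases "x \<in> near_opt X \<phi> (\<delta> * M)")
    case True
    have "\<psi> x \<le> A + L * normdist N x F0"
      unfolding A_def using assms(1,2) F0X y0 bdd_F0 that
      by (intro lipschitz_wrt_le_Sup_plus_normdist) auto
    also have "\<dots> \<le> A + L * g"
      using dist_le_g[OF True] L by (simp add: mult_left_mono)
    finally have "\<delta> * \<psi> x \<le> \<delta> * (A + L * g)"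
      using assms(3) by (rule mult_left_mono)
    moreover have "\<phi> x \<le> m"
      unfolding m_def using that assms(5) by (simp add: cSup_upper)
    ultimately show ?thesis
      by (simp add: algebra_simps)
  next
    case False
    then have "\<phi> x < m - \<delta> * M"
      using that unfolding near_opt_def m_def by auto
    moreover have "\<psi> x \<le> A + M"
      unfolding M_def using \<psi>_le_Sup[OF that] Inf_le_\<psi>[OF y0X] \<psi>_y0 by linarith
    then have "\<delta> * \<psi> x \<le> \<delta> * A + \<delta> * M"
      using assms(3) by (simp add: mult_left_mono flip: distrib_left)
    moreover have "0 \<le> L * \<delta> * g"
      using L \<open>0 \<le> g\<close> assms(3) by simp
    ultimately show ?thesis
      by linarith
  qed
  then show ?thesis
    unfolding m_def F0_def A_def M_def g_def using assms(4)
    by (intro cSup_least) auto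
qed

theorem lemma5p12:
  fixes X :: "(real ^ 'n) set" and \<phi> \<psi> :: "real ^ 'n \<Rightarrow> real"
    and N :: "real ^ 'n \<Rightarrow> real" and L \<delta> :: real
  assumes "is_norm N"
    and "X \<noteq> {}" and "compact X"
    and "upper_semicontinuous_on X \<phi>"
    and "lipschitz_wrt N L X \<psi>"
    and "\<delta> \<ge> 0"
  shows "\<bar>Sup ((\<lambda>x. \<phi> x + \<delta> * \<psi> x) ` X)
           - (Sup (\<phi> ` X) + \<delta> * Sup (\<psi> ` argmax_set X \<phi>))\<bar>
         \<le> L * \<delta> * gfun N X \<phi> (\<delta> * (Sup (\<psi> ` X) - Inf (\<psi> ` X)))"
proof -
  obtain x0 where x0: "x0 \<in> X" "\<And>y. y \<in> X \<Longrightarrow> \<phi> y \<le> \<phi> x0"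
    using compact_attains_sup_upper_semicontinuous[OF assms(3,2,4)] by blast
  have bdd_\<phi>: "bdd_above (\<phi> ` X)"
    using x0(2) by (rule bdd_aboveI2)
  have x0_argmax: "x0 \<in> argmax_set X \<phi>"
    unfolding argmax_set_def using x0 by (auto intro: cSup_eq_maximum[symmetric])
  then have argmax_nonempty: "argmax_set X \<phi> \<noteq> {}"
    by blast
  have "bounded (\<psi> ` X)"
    using lipschitz_wrt_bounded_image[OF assms(1,5,3)] .
  then have bdd_\<psi>: "bdd_above (\<psi> ` X)" "bdd_below (\<psi> ` X)"
    by (simp_all add: bounded_imp_bdd_above bounded_imp_bdd_below)
  have bdd_normdist: "bdd_above ((\<lambda>x. normdist N x (argmax_set X \<phi>)) ` X)"
    using bdd_above_normdist[OF assms(1) compact_imp_bounded[OF assms(3)] x0_argmax] .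
  show ?thesis
    unfolding abs_le_iff
    using Sup_perturbed_ge[OF assms(6) argmax_nonempty bdd_\<phi> bdd_\<psi>(1)]
      Sup_perturbed_le[OF assms(1,5,6,2) bdd_\<phi> argmax_nonempty bdd_\<psi> bdd_normdist]
    by linarith
qed

end
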